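(* For every indexed forest $F$ and every noncrossing permutation $\sigma$, the evaluation $\mathrm{ev}_\sigma(\mathfrak P_F)$ is Graham-positive, i.e. lies in $\mathbb Z_{\ge0}[t_2-t_1,t_3-t_2,\dots]$.
   Context: $\mathbf x=(x_1,x_2,\dots)$, $\mathbf t=(t_1,t_2,\dots)$; for $\sigma\in S_n$ (regarded as fixing integers $>n$), $\mathrm{ev}_\sigma f=f(t_{\sigma(1)},t_{\sigma(2)},\dots;\mathbf t)$. A set partition of $[n]$ is noncrossing if there are no distinct blocks $P,Q$ with $a,b\in P$, $c,d\in Q$, $a<c<b<d$; the associated noncrossing permutation acts on each block $\{a_1<\dots<a_p\}$ by $a_j\mapsto a_{j-1}$ ($j\ge2$), $a_1\mapsto a_p$. Indexed forests: sequences $F=(T_1,T_2,\dots)$ of binary plane trees (each node a leaf or an internal node with ordered left/right children), all but finitely many one-node trees; leaves identified with $\mathbb N$ left to right; $\emptyset$ has no internal nodes; $\rho_F(v)$ is the leaf reached from internal node $v$ by going repeatedly to left children; terminal: both children leaves; $\mathrm{Qdes}(F)=\{\rho_F(v):v\text{ terminal}\}$; $F/i$ deletes the terminal node with $\rho_F(v)=i$ (replacing it and its leaves by one leaf, relabeling). Double forest polynomials: $R_i^-f=f(x_1,\dots,x_{i-1},t_i,x_i,\dots;\mathbf t)$, $R_i^+f=f(x_1,\dots,x_i,t_i,x_{i+1},\dots;\mathbf t)$, $E_if=(R_i^+f-R_i^-f)/(x_i-t_i)$; $\mathfrak P_F$ is the unique homogeneous family ($\deg x_i=\deg t_i=1$)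 with $\mathfrak P_F(\mathbf t;\mathbf t)=\delta_{F,\emptyset}$ and $E_i\mathfrak P_F=\mathfrak P_{F/i}(\mathbf x;\widehat{\mathbf t}_i)$ if $i\in\mathrm{Qdes}(F)$, else $0$, $\widehat{\mathbf t}_i=(t_1,\dots,t_{i-1},t_{i+1},\dots)$. *)

theory Defs
  imports Main "HOL-Library.Poly_Mapping" "HOL-Library.Disjoint_Sets"
begin

text \<open>Variables: X k stands for x_(k+1), T k for t_(k+1) (0-based indexing).\<close>
datatype var = X nat | T nat

type_synonym 'v mpoly = "('v \<Rightarrow>\<^sub>0 nat) \<Rightarrow>\<^sub>0 int"

definition Var :: "'v \<Rightarrow> 'v mpoly" where
  "Var v = Poly_Mapping.single (Poly_Mapping.single v 1) 1"

definition Const :: "int \<Rightarrow> 'v mpoly" where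
  "Const c = Poly_Mapping.single 0 c"

definition psubst :: "('v \<Rightarrow> 'w mpoly) \<Rightarrow> 'v mpoly \<Rightarrow> 'w mpoly" where
  "psubst s p = (\<Sum>m\<in>Poly_Mapping.keys p. Const (Poly_Mapping.lookup p m) * (\<Prod>v\<in>Poly_Mapping.keys m. s v ^ Poly_Mapping.lookup m v))"

definition mdeg :: "('v \<Rightarrow>\<^sub>0 nat) \<Rightarrow> nat" where
  "mdeg m = (\<Sum>v\<in>Poly_Mapping.keys m. Poly_Mapping.lookup m v)"

definition homogeneous :: "'v mpoly \<Rightarrow> bool" where
  "homogeneous p \<longleftrightarrow> (\<exists>d. \<forall>m\<in>Poly_Mapping.keys p. mdeg m = d)"

text \<open>R_i^-, R_i^+ (paper index i+1), t-hat_i, evaluation x := t, ev_sigma.\<close>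
definition Rminus :: "nat \<Rightarrow> var mpoly \<Rightarrow> var mpoly" where
  "Rminus i = psubst (\<lambda>v. case v of
       X j \<Rightarrow> (if j < i then Var (X j) else if j = i then Var (T i) else Var (X (j - 1)))
     | T j \<Rightarrow> Var (T j))"

definition Rplus :: "nat \<Rightarrow> var mpoly \<Rightarrow> var mpoly" where
  "Rplus i = psubst (\<lambda>v. case v of
       X j \<Rightarrow> (if j \<le> i then Var (X j) else if j = Suc i then Var (T i) else Var (X (j - 1)))
     | T j \<Rightarrow> Var (T j))"

definition that :: "nat \<Rightarrow> var mpoly \<Rightarrow> var mpoly" where
  "that i = psubst (\<lambda>v. case v of
       X j \<Rightarrow> Var (X j)
     | T j \<Rightarrow> (if j < i then Var (T j) else Var (T (Suc j))))"

definition eval_tt :: "var mpoly \<Rightarrow> var mpoly" where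
  "eval_tt = psubst (\<lambda>v. case v of X j \<Rightarrow> Var (T j) | T j \<Rightarrow> Var (T j))"

definition ev :: "(nat \<Rightarrow> nat) \<Rightarrow> var mpoly \<Rightarrow> var mpoly" where
  "ev \<sigma> = psubst (\<lambda>v. case v of X j \<Rightarrow> Var (T (\<sigma> j)) | T j \<Rightarrow> Var (T j))"

text \<open>Graham-positive: in Z_{>=0}[t_2-t_1, t_3-t_2, ...]; Graham variable j is t_(j+2)-t_(j+1).\<close>
definition graham_positive :: "var mpoly \<Rightarrow> bool" where
  "graham_positive p \<longleftrightarrow>
     (\<exists>q :: nat mpoly. (\<forall>m. 0 \<le> Poly_Mapping.lookup q m) \<and>
        p = psubst (\<lambda>j. Var (T (Suc j)) - Var (T j)) q)"

datatype btree = Lf | Nd btree btree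

fun nleaves :: "btree \<Rightarrow> nat" where
  "nleaves Lf = 1"
| "nleaves (Nd l r) = nleaves l + nleaves r"

text \<open>Left leaves (0-based, within the tree) of terminal internal nodes.\<close>
fun tqdes :: "btree \<Rightarrow> nat set" where
  "tqdes Lf = {}"
| "tqdes (Nd l r) = (if l = Lf \<and> r = Lf then {0}
                     else tqdes l \<union> (\<lambda>k. k + nleaves l) ` tqdes r)"

text \<open>Contract the terminal node whose left leaf is k.\<close>
fun tcontract :: "nat \<Rightarrow> btree \<Rightarrow> btree" where
  "tcontract k Lf = Lf"
| "tcontract k (Nd l r) = (if l = Lf \<and> r = Lf then (if k = 0 then Lf else Nd l r)
                          else if k < nleaves l then Nd (tcontract k l) r
                          else Nd l (tcontract (k - nleaves l) r))"

type_synonym forest = "nat \<Rightarrow> btree"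

definition is_forest :: "forest \<Rightarrow> bool" where
  "is_forest F \<longleftrightarrow> finite {i. F i \<noteq> Lf}"

definition empty_forest :: forest where
  "empty_forest = (\<lambda>_. Lf)"

text \<open>Label of the first leaf of the i-th tree (leaves numbered 0,1,2,... left to right).\<close>
definition offset :: "forest \<Rightarrow> nat \<Rightarrow> nat" where
  "offset F i = (\<Sum>j<i. nleaves (F j))"

definition Qdes :: "forest \<Rightarrow> nat set" where
  "Qdes F = (\<Union>j. (\<lambda>k. offset F j + k) ` tqdes (F j))"

definition fcontract :: "forest \<Rightarrow> nat \<Rightarrow> forest" where
  "fcontract F i = (let j = (THE j. offset F j \<le> i \<and> i < offset F (Suc j))
                    in F(j := tcontract (i - offset F j) (F j)))"

definition is_double_forest_family :: "(forest \<Rightarrow> var mpoly) \<Rightarrow> bool" where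
  "is_double_forest_family P \<longleftrightarrow>
     (\<forall>F. is_forest F \<longrightarrow> homogeneous (P F)) \<and>
     (\<forall>F. is_forest F \<longrightarrow> eval_tt (P F) = (if F = empty_forest then 1 else 0)) \<and>
     (\<forall>F i. is_forest F \<longrightarrow>
        (Var (X i) - Var (T i)) *
          (if i \<in> Qdes F then that i (P (fcontract F i)) else 0)
        = Rplus i (P F) - Rminus i (P F))"

definition noncrossing :: "nat set set \<Rightarrow> bool" where
  "noncrossing Ps \<longleftrightarrow> \<not> (\<exists>P\<in>Ps. \<exists>Q\<in>Ps. P \<noteq> Q \<and>
      (\<exists>a b c d. a \<in> P \<and> b \<in> P \<and> c \<in> Q \<and> d \<in> Q \<and> a < c \<and> c < b \<and> b < d))"

definition nc_perm :: "nat \<Rightarrow> nat set set \<Rightarrow> nat \<Rightarrow> nat" where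
  "nc_perm n Ps k = (if k < n then
      (let B = (THE B. B \<in> Ps \<and> k \<in> B) in
         if k = Min B then Max B else Max {b \<in> B. b < k})
     else k)"

definition noncrossing_perm :: "(nat \<Rightarrow> nat) \<Rightarrow> bool" where
  "noncrossing_perm \<sigma> \<longleftrightarrow> (\<exists>n Ps. partition_on {..<n} Ps \<and> noncrossing Ps \<and> \<sigma> = nc_perm n Ps)"

end

theory Submission
  imports Defs
begin

text \<open>
  Write \<open>\<rho>\<^sup>+\<close> and \<open>\<rho>\<^sup>-\<close> for a sequence \<open>\<rho>\<close> avoiding the value \<open>i\<close> with
  \<open>i\<close> inserted after resp. at position \<open>i\<close>. Evaluating the defining recurrence of
  \<open>\<PP>\<^sub>F\<close> at \<open>x := t\<^sub>\<rho>\<close> gives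
  \<open>ev(\<rho>\<^sup>+) \<PP>\<^sub>F = ev(\<rho>\<^sup>-) \<PP>\<^sub>F + (t(\<rho> i) - t(i)) \<cdot> that\<^sub>i (ev(\<rho>') \<PP>\<^sub>F\<^sub>/\<^sub>i)\<close>
  with \<open>\<rho>'\<close> the standardisation of \<open>\<rho>\<close>. As \<open>t(b) - t(a)\<close> is Graham-positive for
  \<open>a \<le> b\<close> and \<open>ev(id) \<PP>\<^sub>F \<in> {0, 1}\<close>, Graham positivity propagates from the identity
  along these moves, in either direction depending on the sign of \<open>\<rho> i - i\<close>.

  Every noncrossing permutation \<open>\<sigma> \<noteq> id\<close> is reached by a move. Let \<open>m\<close> be its least
  descent and \<open>a = \<sigma> m\<close>; then \<open>a\<close> and \<open>m\<close> are the two smallest elements of their block.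
  If \<open>m = a + 1\<close>, then \<open>\<sigma> = \<rho>\<^sup>+\<close> for \<open>i = a\<close>, and \<open>\<rho>\<^sup>-\<close> splits \<open>a\<close> off its block.
  Otherwise noncrossingness forces \<open>m - 1\<close> to be a fixed point, \<open>\<sigma> = \<rho>\<^sup>-\<close> for
  \<open>i = m - 1\<close>, and \<open>\<rho>\<^sup>+\<close> merges \<open>m - 1\<close> into the block of \<open>m\<close>. In both cases the
  other permutation is noncrossing with smaller total squared displacement, and \<open>\<rho>'\<close> is
  the noncrossing permutation of the partition with one point deleted, so a double induction
  on the size and the displacement concludes.
\<close>

section \<open>Substitution is a ring homomorphism\<close>

lemma Const_eq_of_int: "Const c = of_int c"
  unfolding Const_def by (metis of_int_eq_id id_apply single_of_int)

definition subst_monom :: "('v \<Rightarrow> 'w mpoly) \<Rightarrow> ('v \<Rightarrow>\<^sub>0 nat) \<Rightarrow> 'w mpoly" where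
  "subst_monom s m = (\<Prod>v\<in>Poly_Mapping.keys m. s v ^ Poly_Mapping.lookup m v)"

lemma subst_monom_superset:
  "finite V \<Longrightarrow> Poly_Mapping.keys m \<subseteq> V \<Longrightarrow>
    subst_monom s m = (\<Prod>v\<in>V. s v ^ Poly_Mapping.lookup m v)"
  unfolding subst_monom_def by (rule prod.mono_neutral_left) (auto simp: in_keys_iff)

lemma subst_monom_add: "subst_monom s (m1 + m2) = subst_monom s m1 * subst_monom s m2"
proof -
  let ?V = "Poly_Mapping.keys m1 \<union> Poly_Mapping.keys m2"
  have "subst_monom s (m1 + m2) = (\<Prod>v\<in>?V. s v ^ Poly_Mapping.lookup (m1 + m2) v)"
    using keys_add[of m1 m2] by (intro subst_monom_superset) auto
  also have "\<dots> = (\<Prod>v\<in>?V. s v ^ Poly_Mapping.lookup m1 v) * (\<Prod>v\<in>?V. s v ^ Poly_Mapping.lookup m2 v)"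
    by (simp add: lookup_add power_add prod.distrib)
  also have "\<dots> = subst_monom s m1 * subst_monom s m2"
    by (subst (1 2) subst_monom_superset[where V = ?V]) auto
  finally show ?thesis .
qed

lemma psubst_superset:
  "finite S \<Longrightarrow> Poly_Mapping.keys p \<subseteq> S \<Longrightarrow>
    psubst s p = (\<Sum>m\<in>S. of_int (Poly_Mapping.lookup p m) * subst_monom s m)"
  unfolding psubst_def subst_monom_def Const_eq_of_int
  by (rule sum.mono_neutral_left) (auto simp: in_keys_iff)

lemma psubst_single: "psubst s (Poly_Mapping.single m c) = of_int c * subst_monom s m"
  by (simp add: psubst_def subst_monom_def Const_eq_of_int)

lemma psubst_zero [simp]: "psubst s 0 = 0"
  by (simp add: psubst_def)

lemma psubst_of_int [simp]: "psubst s (of_int c) = of_int c"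
  using psubst_single[of s 0 c] by (simp add: subst_monom_def flip: single_of_int)

lemma psubst_one [simp]: "psubst s 1 = 1"
  using psubst_of_int[of s 1] by simp

lemma psubst_Var [simp]: "psubst s (Var v) = s v"
  by (simp add: Var_def psubst_single subst_monom_def)

lemma psubst_add: "psubst s (p + q) = psubst s p + psubst s q"
proof -
  let ?S = "Poly_Mapping.keys p \<union> Poly_Mapping.keys q"
  have "psubst s (p + q) = (\<Sum>m\<in>?S. of_int (Poly_Mapping.lookup (p + q) m) * subst_monom s m)"
    using keys_add[of p q] by (intro psubst_superset) auto
  also have "\<dots> = psubst s p + psubst s q"
    by (subst (1 2) psubst_superset[where S = ?S]) (auto simp: lookup_add algebra_simps sum.distrib)
  finally show ?thesis .
qed

lemma psubst_diff: "psubst s (p - q) = psubst s p - psubst s q"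
  using psubst_add[of s "p - q" q] by simp

lemma psubst_sum: "psubst s (\<Sum>i\<in>I. f i) = (\<Sum>i\<in>I. psubst s (f i))"
  by (induction I rule: infinite_finite_induct) (auto simp: psubst_add)

lemma times_poly_mapping_expand:
  "p * q = (\<Sum>m\<in>Poly_Mapping.keys p. \<Sum>n\<in>Poly_Mapping.keys q.
      Poly_Mapping.single (m + n) (Poly_Mapping.lookup p m * Poly_Mapping.lookup q n))"
proof -
  have expand: "r = (\<Sum>m\<in>Poly_Mapping.keys r. Poly_Mapping.single m (Poly_Mapping.lookup r m))"
    for r :: "('a, 'b) poly_mapping"
    by (rule poly_mapping_eqI) (simp add: lookup_sum lookup_single when_def in_keys_iff)
  show ?thesis
    by (subst (1 2) expand) (simp only: sum_product mult_single)
qed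

lemma psubst_mult: "psubst s (p * q) = psubst s p * psubst s q"
proof -
  have "psubst s (p * q) = (\<Sum>m\<in>Poly_Mapping.keys p. \<Sum>n\<in>Poly_Mapping.keys q.
      of_int (Poly_Mapping.lookup p m) * subst_monom s m * (of_int (Poly_Mapping.lookup q n) * subst_monom s n))"
    by (subst times_poly_mapping_expand)
      (simp only: psubst_sum psubst_single subst_monom_add of_int_mult mult_ac)
  also have "\<dots> = psubst s p * psubst s q"
    by (simp only: psubst_superset[OF finite_keys subset_refl] sum_product)
  finally show ?thesis .
qed

lemma psubst_prod: "psubst s (\<Prod>i\<in>I. f i) = (\<Prod>i\<in>I. psubst s (f i))"
  by (induction I rule: infinite_finite_induct) (auto simp: psubst_mult)

lemma psubst_power: "psubst s (p ^ k) = psubst s p ^ k"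
  by (induction k) (auto simp: psubst_mult)

lemma psubst_psubst: "psubst s (psubst r p) = psubst (\<lambda>v. psubst s (r v)) p"
  unfolding psubst_def[of r] Const_eq_of_int
  by (simp add: psubst_sum psubst_mult psubst_prod psubst_power
      psubst_def[of "\<lambda>v. psubst s (r v)"] Const_eq_of_int)

section \<open>The semiring generated by the Graham variables\<close>

inductive graham_semiring :: "var mpoly \<Rightarrow> bool" where
  graham_semiring_const: "c \<ge> 0 \<Longrightarrow> graham_semiring (of_int c)"
| graham_semiring_step: "graham_semiring (Var (T (Suc j)) - Var (T j))"
| graham_semiring_add: "graham_semiring p \<Longrightarrow> graham_semiring q \<Longrightarrow> graham_semiring (p + q)"
| graham_semiring_mult: "graham_semiring p \<Longrightarrow> graham_semiring q \<Longrightarrow> graham_semiring (p * q)"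

lemma graham_semiring_0: "graham_semiring 0"
  using graham_semiring_const[of 0] by simp

lemma graham_semiring_1: "graham_semiring 1"
  using graham_semiring_const[of 1] by simp

lemma graham_semiring_diff: "a \<le> b \<Longrightarrow> graham_semiring (Var (T b) - Var (T a))"
proof (induction b)
  case 0
  then show ?case using graham_semiring_0 by simp
next
  case (Suc b)
  show ?case
  proof (cases "a = Suc b")
    case True
    then show ?thesis using graham_semiring_0 by simp
  next
    case False
    with Suc have "graham_semiring ((Var (T (Suc b)) - Var (T b)) + (Var (T b) - Var (T a)))"
      by (intro graham_semiring_add graham_semiring_step) simp
    then show ?thesis by simp
  qed
qed

lemma lookup_times_nonneg:
  fixes p q :: "'v mpoly"
  assumes "\<forall>m. 0 \<le> Poly_Mapping.lookup p m" and "\<forall>m. 0 \<le> Poly_Mapping.lookup q m"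
  shows "\<forall>m. 0 \<le> Poly_Mapping.lookup (p * q) m"
  using assms by (subst times_poly_mapping_expand)
    (auto simp: lookup_sum lookup_single when_def intro!: sum_nonneg)

lemma graham_semiring_imp_graham_positive: "graham_semiring p \<Longrightarrow> graham_positive p"
proof (induction rule: graham_semiring.induct)
  case (graham_semiring_const c)
  then show ?case unfolding graham_positive_def
    by (intro exI[of _ "of_int c"]) (simp add: lookup_of_int when_def)
next
  case (graham_semiring_step j)
  have "\<forall>m. 0 \<le> Poly_Mapping.lookup (Var j :: nat mpoly) m"
    by (simp add: Var_def lookup_single when_def)
  then show ?case unfolding graham_positive_def
    by (intro exI[of _ "Var j"]) simp
next
  case (graham_semiring_add p q)
  then obtain p' q' where "\<forall>m. 0 \<le> Poly_Mapping.lookup p' m" "\<forall>m. 0 \<le> Poly_Mapping.lookup q' m"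
    "p = psubst (\<lambda>j. Var (T (Suc j)) - Var (T j)) p'" "q = psubst (\<lambda>j. Var (T (Suc j)) - Var (T j)) q'"
    unfolding graham_positive_def by blast
  then show ?case unfolding graham_positive_def
    by (intro exI[of _ "p' + q'"]) (simp add: psubst_add lookup_add)
next
  case (graham_semiring_mult p q)
  then obtain p' q' where "\<forall>m. 0 \<le> Poly_Mapping.lookup p' m" "\<forall>m. 0 \<le> Poly_Mapping.lookup q' m"
    "p = psubst (\<lambda>j. Var (T (Suc j)) - Var (T j)) p'" "q = psubst (\<lambda>j. Var (T (Suc j)) - Var (T j)) q'"
    unfolding graham_positive_def by blast
  then show ?case unfolding graham_positive_def
    by (intro exI[of _ "p' * q'"]) (simp add: psubst_mult lookup_times_nonneg)
qed

definition skip :: "nat \<Rightarrow> nat \<Rightarrow> nat" where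
  "skip i k = (if k < i then k else Suc k)"

lemma mono_skip: "mono (skip i)"
  by (auto simp: skip_def intro!: monoI)

lemma graham_semiring_that: "graham_semiring p \<Longrightarrow> graham_semiring (that i p)"
proof (induction rule: graham_semiring.induct)
  case (graham_semiring_step j)
  have "that i (Var (T (Suc j)) - Var (T j)) = Var (T (skip i (Suc j))) - Var (T (skip i j))"
    by (simp add: that_def psubst_diff skip_def)
  then show ?case
    using graham_semiring_diff[OF monoD[OF mono_skip, of j "Suc j"]] by simp
qed (simp_all add: that_def psubst_add psubst_mult graham_semiring.intros)

section \<open>Evaluation at sequences of \<open>t\<close>-variables\<close>

definition ev_var :: "(nat \<Rightarrow> nat) \<Rightarrow> var \<Rightarrow> var mpoly" where
  "ev_var \<rho> = (\<lambda>v. case v of X j \<Rightarrow> Var (T (\<rho> j)) | T j \<Rightarrow> Var (T j))"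

lemma ev_eq_psubst_ev_var: "ev \<rho> = psubst (ev_var \<rho>)"
  by (simp add: ev_def ev_var_def)

definition insert_after :: "nat \<Rightarrow> (nat \<Rightarrow> nat) \<Rightarrow> nat \<Rightarrow> nat" where
  "insert_after i \<rho> j = (if j \<le> i then \<rho> j else if j = Suc i then i else \<rho> (j - 1))"

definition insert_at :: "nat \<Rightarrow> (nat \<Rightarrow> nat) \<Rightarrow> nat \<Rightarrow> nat" where
  "insert_at i \<rho> j = (if j < i then \<rho> j else if j = i then i else \<rho> (j - 1))"

definition unskip :: "nat \<Rightarrow> (nat \<Rightarrow> nat) \<Rightarrow> nat \<Rightarrow> nat" where
  "unskip i \<rho> j = (if \<rho> j < i then \<rho> j else \<rho> j - 1)"

lemma ev_Rplus: "psubst (ev_var \<rho>) (Rplus i f) = ev (insert_after i \<rho>) f"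
  unfolding Rplus_def psubst_psubst ev_eq_psubst_ev_var
  by (rule arg_cong[where f = "\<lambda>s. psubst s f"])
    (auto simp: ev_var_def insert_after_def split: var.split)

lemma ev_Rminus: "psubst (ev_var \<rho>) (Rminus i f) = ev (insert_at i \<rho>) f"
  unfolding Rminus_def psubst_psubst ev_eq_psubst_ev_var
  by (rule arg_cong[where f = "\<lambda>s. psubst s f"])
    (auto simp: ev_var_def insert_at_def split: var.split)

lemma ev_that:
  assumes "\<forall>j. \<rho> j \<noteq> i"
  shows "psubst (ev_var \<rho>) (that i g) = that i (ev (unskip i \<rho>) g)"
  unfolding that_def psubst_psubst ev_eq_psubst_ev_var
proof (rule arg_cong[where f = "\<lambda>s. psubst s g"], rule ext)
  fix v
  show "psubst (ev_var \<rho>) (case v of X j \<Rightarrow> Var (X j) | T j \<Rightarrow> if j < i then Var (T j) else Var (T (Suc j))) =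
    psubst (\<lambda>v. case v of X j \<Rightarrow> Var (X j) | T j \<Rightarrow> if j < i then Var (T j) else Var (T (Suc j)))
      (ev_var (unskip i \<rho>) v)"
  proof (cases v)
    case (X j)
    then show ?thesis
      using assms[rule_format, of j] by (auto simp: ev_var_def unskip_def)
  qed (auto simp: ev_var_def)
qed

lemma ev_divided_difference:
  assumes "is_double_forest_family P" and "is_forest F" and "\<forall>j. \<rho> j \<noteq> i"
  shows "ev (insert_after i \<rho>) (P F) = ev (insert_at i \<rho>) (P F) +
    (Var (T (\<rho> i)) - Var (T i)) *
      (if i \<in> Qdes F then that i (ev (unskip i \<rho>) (P (fcontract F i))) else 0)"
proof -
  let ?E = "if i \<in> Qdes F then that i (P (fcontract F i)) else 0"
  let ?E' = "if i \<in> Qdes F then that i (ev (unskip i \<rho>) (P (fcontract F i))) else 0"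
  have "(Var (X i) - Var (T i)) * ?E = Rplus i (P F) - Rminus i (P F)"
    using assms(1,2) unfolding is_double_forest_family_def by blast
  moreover have "psubst (ev_var \<rho>) ((Var (X i) - Var (T i)) * ?E) = (Var (T (\<rho> i)) - Var (T i)) * ?E'"
    using ev_that[OF assms(3)] by (simp add: psubst_mult psubst_diff) (simp add: ev_var_def)
  moreover have "psubst (ev_var \<rho>) (Rplus i (P F) - Rminus i (P F)) =
      ev (insert_after i \<rho>) (P F) - ev (insert_at i \<rho>) (P F)"
    by (simp add: psubst_diff ev_Rplus ev_Rminus)
  ultimately have "(Var (T (\<rho> i)) - Var (T i)) * ?E' = ev (insert_after i \<rho>) (P F) - ev (insert_at i \<rho>) (P F)"
    by metis
  then show ?thesis
    by (metis diff_add_cancel add.commute)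
qed

lemma is_forest_fcontract: "is_forest F \<Longrightarrow> is_forest (fcontract F i)"
proof -
  assume "is_forest F"
  obtain j t where "fcontract F i = F(j := t)"
    unfolding fcontract_def Let_def by blast
  moreover have "{k. (F(j := t)) k \<noteq> Lf} \<subseteq> insert j {k. F k \<noteq> Lf}"
    by auto
  ultimately show ?thesis
    using \<open>is_forest F\<close> unfolding is_forest_def by (metis finite_insert finite_subset)
qed

inductive admissible :: "(nat \<Rightarrow> nat) \<Rightarrow> bool" where
  admissible_id: "admissible (\<lambda>k. k)"
| admissible_insert_after: "i < \<rho> i \<Longrightarrow> \<forall>j. \<rho> j \<noteq> i \<Longrightarrow>
    admissible (insert_at i \<rho>) \<Longrightarrow> admissible (unskip i \<rho>) \<Longrightarrow> admissible (insert_after i \<rho>)"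
| admissible_insert_at: "\<rho> i < i \<Longrightarrow> \<forall>j. \<rho> j \<noteq> i \<Longrightarrow>
    admissible (insert_after i \<rho>) \<Longrightarrow> admissible (unskip i \<rho>) \<Longrightarrow> admissible (insert_at i \<rho>)"

lemma admissible_ev_graham_semiring:
  assumes P: "is_double_forest_family P"
  shows "admissible \<sigma> \<Longrightarrow> is_forest F \<Longrightarrow> graham_semiring (ev \<sigma> (P F))"
proof (induction arbitrary: F rule: admissible.induct)
  case admissible_id
  then have "eval_tt (P F) = (if F = empty_forest then 1 else 0)"
    using P unfolding is_double_forest_family_def by blast
  moreover have "ev (\<lambda>k. k) = eval_tt"
    by (simp add: ev_def eval_tt_def)
  ultimately show ?case
    using graham_semiring_0 graham_semiring_1 by simp
next
  case (admissible_insert_after i \<rho>)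
  let ?E = "if i \<in> Qdes F then that i (ev (unskip i \<rho>) (P (fcontract F i))) else 0"
  have "graham_semiring ?E"
    using admissible_insert_after.IH(2) is_forest_fcontract[OF admissible_insert_after.prems]
    by (simp add: graham_semiring_that graham_semiring_0)
  with admissible_insert_after have "graham_semiring (ev (insert_at i \<rho>) (P F) + (Var (T (\<rho> i)) - Var (T i)) * ?E)"
    by (blast intro: graham_semiring_add graham_semiring_mult graham_semiring_diff less_imp_le)
  then show ?case
    using ev_divided_difference[OF P admissible_insert_after.prems admissible_insert_after.hyps(2)] by simp
next
  case (admissible_insert_at \<rho> i)
  let ?E = "if i \<in> Qdes F then that i (ev (unskip i \<rho>) (P (fcontract F i))) else 0"
  have "graham_semiring ?E"
    using admissible_insert_at.IH(2) is_forest_fcontract[OF admissible_insert_at.prems]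
    by (simp add: graham_semiring_that graham_semiring_0)
  with admissible_insert_at have "graham_semiring (ev (insert_after i \<rho>) (P F) + (Var (T i) - Var (T (\<rho> i))) * ?E)"
    by (blast intro: graham_semiring_add graham_semiring_mult graham_semiring_diff less_imp_le)
  then show ?case
    using ev_divided_difference[OF P admissible_insert_at.prems admissible_insert_at.hyps(2)]
    by (simp add: algebra_simps)
qed

section \<open>Set partitions\<close>

lemma partition_on_block_unique:
  "partition_on A Ps \<Longrightarrow> B \<in> Ps \<Longrightarrow> C \<in> Ps \<Longrightarrow> k \<in> B \<Longrightarrow> k \<in> C \<Longrightarrow> B = C"
  unfolding partition_on_def disjoint_def by blast

lemma partition_on_block_subset: "partition_on A Ps \<Longrightarrow> B \<in> Ps \<Longrightarrow> B \<subseteq> A"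
  unfolding partition_on_def by blast

lemma partition_on_block_nonempty: "partition_on A Ps \<Longrightarrow> B \<in> Ps \<Longrightarrow> B \<noteq> {}"
  unfolding partition_on_def by blast

lemma partition_on_block_exists: "partition_on A Ps \<Longrightarrow> k \<in> A \<Longrightarrow> \<exists>B\<in>Ps. k \<in> B"
  using partition_onD1 by blast

lemma partition_on_iff_blocks:
  "partition_on A Ps \<longleftrightarrow> (\<forall>B\<in>Ps. B \<noteq> {} \<and> B \<subseteq> A) \<and> (\<forall>k\<in>A. \<exists>B\<in>Ps. k \<in> B) \<and>
     (\<forall>B\<in>Ps. \<forall>C\<in>Ps. \<forall>k. k \<in> B \<longrightarrow> k \<in> C \<longrightarrow> B = C)"
    (is "_ \<longleftrightarrow> ?blocks \<and> ?cover \<and> ?unique")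
proof
  assume P: "partition_on A Ps"
  show "?blocks \<and> ?cover \<and> ?unique"
    using partition_on_block_nonempty[OF P] partition_on_block_subset[OF P]
      partition_on_block_unique[OF P] partition_onD1[OF P] by blast
next
  assume "?blocks \<and> ?cover \<and> ?unique"
  then have blocks: ?blocks and cover: ?cover and unique: ?unique
    by blast+
  show "partition_on A Ps"
  proof (rule partition_onI)
    show "\<Union>Ps = A"
      using blocks cover by blast
    show "disjnt p q" if "p \<in> Ps" "q \<in> Ps" "p \<noteq> q" for p q
      using that unique unfolding disjnt_def by blast
    show "{} \<notin> Ps"
      using blocks by blast
  qed
qed

lemma partition_on_split_block:
  assumes P: "partition_on A Ps" and B: "B \<in> Ps" and B12: "B1 \<union> B2 = B" "B1 \<inter> B2 = {}"
    and "B1 \<noteq> {}" and "B2 \<noteq> {}"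
  shows "partition_on A (insert B1 (insert B2 (Ps - {B})))"
  unfolding partition_on_iff_blocks
proof (intro conjI ballI allI impI)
  fix p assume p: "p \<in> insert B1 (insert B2 (Ps - {B}))"
  show "p \<noteq> {}" "p \<subseteq> A"
    using p P B B12(1) assms(5,6) unfolding partition_on_iff_blocks by auto
next
  fix k assume "k \<in> A"
  then obtain C where "C \<in> Ps" "k \<in> C"
    using P unfolding partition_on_iff_blocks by blast
  then show "\<exists>p\<in>insert B1 (insert B2 (Ps - {B})). k \<in> p"
    using B12(1) by (cases "C = B") auto
next
  fix p q k
  assume p: "p \<in> insert B1 (insert B2 (Ps - {B}))" and q: "q \<in> insert B1 (insert B2 (Ps - {B}))"
    and k: "k \<in> p" "k \<in> q"
  have in_B: "k \<in> B" if "r \<in> insert B1 (insert B2 (Ps - {B}))" "r \<notin> Ps - {B}" "k \<in> r" for r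
    using that B12(1) by auto
  have not_in_B: "k \<notin> B" if "r \<in> Ps - {B}" "k \<in> r" for r
    using that B P unfolding partition_on_iff_blocks by blast
  show "p = q"
  proof (cases "p \<in> Ps - {B}"; cases "q \<in> Ps - {B}")
    assume "p \<in> Ps - {B}" "q \<in> Ps - {B}"
    then show ?thesis using P k unfolding partition_on_iff_blocks by blast
  next
    assume "p \<in> Ps - {B}" "q \<notin> Ps - {B}"
    then show ?thesis using in_B[OF q _ k(2)] not_in_B[OF _ k(1)] by blast
  next
    assume "p \<notin> Ps - {B}" "q \<in> Ps - {B}"
    then show ?thesis using in_B[OF p _ k(1)] not_in_B[OF _ k(2)] by blast
  next
    assume "p \<notin> Ps - {B}" "q \<notin> Ps - {B}"
    then show ?thesis using p q k B12(2) by auto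
  qed
qed

lemma partition_on_merge_blocks:
  assumes P: "partition_on A Ps" and B: "B \<in> Ps" and C: "C \<in> Ps"
  shows "partition_on A (insert (B \<union> C) (Ps - {B, C}))"
  unfolding partition_on_iff_blocks
proof (intro conjI ballI allI impI)
  fix p assume "p \<in> insert (B \<union> C) (Ps - {B, C})"
  then show "p \<noteq> {}" "p \<subseteq> A"
    using B C partition_on_block_nonempty[OF P] partition_on_block_subset[OF P] by auto
next
  fix k assume "k \<in> A"
  then obtain D where "D \<in> Ps" "k \<in> D"
    using P unfolding partition_on_iff_blocks by blast
  then show "\<exists>p\<in>insert (B \<union> C) (Ps - {B, C}). k \<in> p"
    by (cases "D = B \<or> D = C") auto
next
  fix p q k
  assume p: "p \<in> insert (B \<union> C) (Ps - {B, C})" and q: "q \<in> insert (B \<union> C) (Ps - {B, C})"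
    and k: "k \<in> p" "k \<in> q"
  have not_in_BC: "k \<notin> B \<union> C" if "r \<in> Ps - {B, C}" "k \<in> r" for r
    using that B C P unfolding partition_on_iff_blocks by blast
  show "p = q"
  proof (cases "p \<in> Ps - {B, C}"; cases "q \<in> Ps - {B, C}")
    assume "p \<in> Ps - {B, C}" "q \<in> Ps - {B, C}"
    then show ?thesis using P k unfolding partition_on_iff_blocks by blast
  next
    assume "p \<in> Ps - {B, C}" "q \<notin> Ps - {B, C}"
    then show ?thesis using q k not_in_BC by blast
  next
    assume "p \<notin> Ps - {B, C}" "q \<in> Ps - {B, C}"
    then show ?thesis using p k not_in_BC by blast
  next
    assume "p \<notin> Ps - {B, C}" "q \<notin> Ps - {B, C}"
    then show ?thesis using p q by blast
  qed
qed

definition squeeze :: "nat \<Rightarrow> nat \<Rightarrow> nat" where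
  "squeeze p k = (if k < p then k else k - 1)"

lemma mono_squeeze: "mono (squeeze p)"
  by (auto simp: squeeze_def intro!: monoI)

lemma squeeze_skip [simp]: "squeeze p (skip p j) = j"
  by (simp add: squeeze_def skip_def)

lemma skip_squeeze: "k \<noteq> p \<Longrightarrow> skip p (squeeze p k) = k"
  by (cases "k < p") (auto simp: squeeze_def skip_def)

lemma skip_neq [simp]: "skip p j \<noteq> p"
  by (simp add: skip_def)

lemma strict_mono_skip: "strict_mono (skip p)"
  by (auto simp: skip_def intro!: strict_monoI)

lemma inj_on_squeeze: "inj_on (squeeze p) (- {p})"
  by (metis ComplD inj_onI singletonI skip_squeeze)

definition remove_point :: "nat \<Rightarrow> nat set set \<Rightarrow> nat set set" where
  "remove_point p Ps = (\<lambda>C. squeeze p ` (C - {p})) ` Ps - {{}}"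

lemma partition_on_remove_point:
  assumes P: "partition_on {..<n} Ps" and "p < n"
  shows "partition_on {..<n - 1} (remove_point p Ps)"
  unfolding partition_on_iff_blocks remove_point_def
proof (intro conjI ballI allI impI)
  fix C' assume "C' \<in> (\<lambda>C. squeeze p ` (C - {p})) ` Ps - {{}}"
  then obtain C where "C \<in> Ps" "C' = squeeze p ` (C - {p})" "C' \<noteq> {}"
    by blast
  moreover have "C \<subseteq> {..<n}"
    using partition_on_block_subset[OF P \<open>C \<in> Ps\<close>] .
  moreover have "squeeze p x < n - 1" if "x < n" "x \<noteq> p" for x
    using that \<open>p < n\<close> by (auto simp: squeeze_def)
  ultimately show "C' \<noteq> {}" "C' \<subseteq> {..<n - 1}"
    by auto
next
  fix j assume "j \<in> {..<n - 1}"
  then have "skip p j < n"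
    using \<open>p < n\<close> by (auto simp: skip_def)
  then obtain C where "C \<in> Ps" "skip p j \<in> C"
    using P unfolding partition_on_iff_blocks by blast
  then have "j \<in> squeeze p ` (C - {p})"
    by (metis DiffI image_eqI singletonD skip_neq squeeze_skip)
  then show "\<exists>C'\<in>(\<lambda>C. squeeze p ` (C - {p})) ` Ps - {{}}. j \<in> C'"
    using \<open>C \<in> Ps\<close> by blast
next
  fix C' D' j
  assume "C' \<in> (\<lambda>C. squeeze p ` (C - {p})) ` Ps - {{}}" "D' \<in> (\<lambda>C. squeeze p ` (C - {p})) ` Ps - {{}}"
    and "j \<in> C'" "j \<in> D'"
  then obtain C D x y where "C \<in> Ps" "C' = squeeze p ` (C - {p})" "x \<in> C - {p}" "j = squeeze p x"
    and "D \<in> Ps" "D' = squeeze p ` (D - {p})" "y \<in> D - {p}" "j = squeeze p y"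
    by blast
  moreover from this have "x = y"
    using inj_on_squeeze by (metis ComplI DiffD2 inj_on_eq_iff)
  ultimately show "C' = D'"
    using partition_on_block_unique[OF P \<open>C \<in> Ps\<close> \<open>D \<in> Ps\<close>] by blast
qed

section \<open>Cyclic predecessors and noncrossing permutations\<close>

text \<open>
  On \<open>k \<in> B\<close> this is the formula inside \<^const>\<open>nc_perm\<close>; phrased without \<open>Min B\<close>, it
  stays meaningful for \<open>k \<notin> B\<close>, which lets blocks gain or lose elements.
\<close>

definition cyclic_pred :: "nat set \<Rightarrow> nat \<Rightarrow> nat" where
  "cyclic_pred B k = (if \<exists>b\<in>B. b < k then Max {b\<in>B. b < k} else Max B)"

lemma cyclic_pred_eq_Max_below:
  "\<exists>b\<in>B. b < k \<Longrightarrow> cyclic_pred B k = Max {b\<in>B. b < k}"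
  by (simp add: cyclic_pred_def)

lemma cyclic_pred_no_less:
  "\<not> (\<exists>b\<in>B. b < k) \<Longrightarrow> cyclic_pred B k = Max B"
  by (simp add: cyclic_pred_def)

lemma cyclic_pred_in:
  assumes "finite B" and "k \<in> B"
  shows "cyclic_pred B k \<in> B"
proof (cases "\<exists>b\<in>B. b < k")
  case True
  then have "Max {b\<in>B. b < k} \<in> {b\<in>B. b < k}"
    using assms(1) by (intro Max_in) auto
  then show ?thesis using True by (simp add: cyclic_pred_def)
next
  case False
  then show ?thesis
    using assms by (auto simp: cyclic_pred_def intro!: Max_in)
qed

lemma cyclic_pred_less:
  assumes "finite B" and "b \<in> B" and "b < k"
  shows "b \<le> cyclic_pred B k" and "cyclic_pred B k < k"
proof -
  have fin: "finite {b\<in>B. b < k}" and b: "b \<in> {b\<in>B. b < k}"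
    using assms by auto
  have "cyclic_pred B k = Max {b\<in>B. b < k}"
    using assms(2,3) by (auto simp: cyclic_pred_def)
  moreover have "Max {b\<in>B. b < k} \<in> {b\<in>B. b < k}"
    using Max_in[OF fin] b by blast
  ultimately show "b \<le> cyclic_pred B k" "cyclic_pred B k < k"
    using Max_ge[OF fin b] by auto
qed

lemma cyclic_pred_inj_on:
  assumes "finite B"
  shows "inj_on (cyclic_pred B) B"
proof -
  have "x = y" if "x \<in> B" "y \<in> B" "x < y" "cyclic_pred B x = cyclic_pred B y" for x y
  proof -
    have "x \<le> cyclic_pred B y" "cyclic_pred B y < y"
      using cyclic_pred_less[OF assms that(1) that(3)] by auto
    moreover have "cyclic_pred B x < x \<or> cyclic_pred B x = Max B"
      using cyclic_pred_less(2)[OF assms] cyclic_pred_no_less by metis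
    moreover have "y \<le> Max B"
      using assms that(2) by simp
    ultimately show ?thesis
      using that(4) by linarith
  qed
  then show ?thesis
    by (metis inj_onI linorder_neqE_nat)
qed

lemma Max_Diff_eq:
  "finite S \<Longrightarrow> S \<noteq> {} \<Longrightarrow> Max S \<noteq> x \<Longrightarrow> Max (S - {x}) = Max S"
  by (intro Max_eqI) auto

lemma cyclic_pred_Diff_other:
  assumes fin: "finite B" and "cyclic_pred B y \<noteq> m"
  shows "cyclic_pred (B - {m}) y = cyclic_pred B y"
proof (cases "\<exists>b\<in>B. b < y")
  case True
  let ?L = "{b\<in>B. b < y}"
  have fin_L: "finite ?L" and L_Diff: "{b\<in>B - {m}. b < y} = ?L - {m}"
    using fin by auto
  have pred: "cyclic_pred B y = Max ?L"
    using True by (rule cyclic_pred_eq_Max_below)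
  have "Max ?L \<in> ?L"
    using Max_in[OF fin_L] True by blast
  then have "Max ?L \<in> ?L - {m}"
    using pred assms(2) by simp
  then have "\<exists>b\<in>B - {m}. b < y"
    by auto
  then have "cyclic_pred (B - {m}) y = Max (?L - {m})"
    by (simp only: cyclic_pred_eq_Max_below L_Diff)
  then show ?thesis
    using pred Max_Diff_eq[OF fin_L] assms(2) True by auto
next
  case False
  then have "cyclic_pred B y = Max B" "cyclic_pred (B - {m}) y = Max (B - {m})"
    by (simp_all add: cyclic_pred_no_less)
  then show ?thesis
    using Max_Diff_eq[OF fin] assms(2) by fastforce
qed

lemma cyclic_pred_Diff_pred_below:
  assumes fin: "finite B" and y: "y \<in> B" and pred: "cyclic_pred B y = m" and below: "\<exists>b\<in>B. b < y"
  shows "cyclic_pred (B - {m}) y = cyclic_pred B m"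
proof -
  let ?L = "{b\<in>B. b < y}"
  have fin_L: "finite ?L"
    using fin by simp
  have "m = Max ?L"
    using pred cyclic_pred_eq_Max_below[OF below] by simp
  moreover have "Max ?L \<in> ?L" "\<forall>x\<in>?L. x \<le> Max ?L"
    using Max_in[OF fin_L] Max_ge[OF fin_L] below by blast+
  ultimately have "m \<in> ?L" "\<forall>x\<in>?L. x \<le> m"
    by simp_all
  then have "m < y" and below_m: "{b\<in>B. b < m} = ?L - {m}"
    by force+
  show ?thesis
  proof (cases "\<exists>b\<in>B. b < m")
    case True
    then obtain b where "b \<in> B - {m}" "b < y"
      using \<open>m < y\<close> by force
    then have "cyclic_pred (B - {m}) y = Max {b\<in>B - {m}. b < y}"
      by (intro cyclic_pred_eq_Max_below) blast
    also have "{b\<in>B - {m}. b < y} = {b\<in>B. b < m}"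
      using below_m by auto
    also have "Max {b\<in>B. b < m} = cyclic_pred B m"
      using True by (simp add: cyclic_pred_eq_Max_below)
    finally show ?thesis .
  next
    case False
    then have "\<not> (\<exists>b\<in>B - {m}. b < y)"
      using below_m by auto
    moreover have "Max (B - {m}) = Max B"
      using fin y \<open>m < y\<close> by (intro Max_Diff_eq) (auto dest: Max_ge)
    ultimately show ?thesis
      using False by (simp add: cyclic_pred_no_less)
  qed
qed

lemma cyclic_pred_Diff_pred:
  assumes fin: "finite B" and y: "y \<in> B" "y \<noteq> m" and pred: "cyclic_pred B y = m"
  shows "cyclic_pred (B - {m}) y = cyclic_pred B m"
proof (cases "\<exists>b\<in>B. b < y")
  case True
  then show ?thesis
    using cyclic_pred_Diff_pred_below[OF fin y(1) pred] by blast
next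
  case False
  then have "Max B = m"
    using pred by (simp add: cyclic_pred_no_less)
  then have below_m: "{b\<in>B. b < m} = B - {m}" and "y < m"
    using fin y by (auto dest: Max_ge simp: le_less)
  then have "cyclic_pred B m = Max (B - {m})"
    using y cyclic_pred_eq_Max_below[of B m] by auto
  moreover have "\<not> (\<exists>b\<in>B - {m}. b < y)"
    using False by blast
  ultimately show ?thesis
    by (simp add: cyclic_pred_no_less)
qed

lemma cyclic_pred_Diff:
  "finite B \<Longrightarrow> y \<in> B \<Longrightarrow> y \<noteq> m \<Longrightarrow>
    cyclic_pred (B - {m}) y = (if cyclic_pred B y = m then cyclic_pred B m else cyclic_pred B y)"
  using cyclic_pred_Diff_other cyclic_pred_Diff_pred by simp

context
  fixes B :: "nat set" and i b :: nat
  assumes fin: "finite B" and i: "i \<notin> B" and b: "b \<in> B" "b < i"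
    and b_last: "\<And>x. x \<in> B \<Longrightarrow> x < i \<Longrightarrow> x \<le> b"
begin

lemma cyclic_pred_insert_new: "cyclic_pred (insert i B) i = b"
proof -
  have "Max {x\<in>insert i B. x < i} = b"
    using fin b b_last by (intro Max_eqI) auto
  then show ?thesis
    using b by (auto simp: cyclic_pred_def)
qed

lemma above_b_above_i: "x \<in> B \<Longrightarrow> b < x \<Longrightarrow> i < x"
  using b_last i by (metis leD linorder_neqE_nat)

lemma cyclic_pred_insert_below:
  assumes y: "y \<in> B" "y < i"
  shows "cyclic_pred (insert i B) y = (if cyclic_pred B y = b then i else cyclic_pred B y)"
proof (cases "\<exists>x\<in>B. x < y")
  case True
  have "{x\<in>insert i B. x < y} = {x\<in>B. x < y}"
    using y by auto
  then have "cyclic_pred (insert i B) y = cyclic_pred B y"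
    using True by (simp add: cyclic_pred_eq_Max_below)
  moreover have "cyclic_pred B y < y" "y \<le> b"
    using True cyclic_pred_less(2)[OF fin] b_last y by auto
  ultimately show ?thesis
    by auto
next
  case False
  moreover from this have "\<not> (\<exists>x\<in>insert i B. x < y)"
    using y by auto
  ultimately have pred: "cyclic_pred B y = Max B" "cyclic_pred (insert i B) y = Max (insert i B)"
    by (simp_all add: cyclic_pred_no_less)
  have "B \<noteq> {}"
    using b by auto
  then have Max_ins: "Max (insert i B) = max i (Max B)" "b \<le> Max B" "Max B \<in> B"
    using fin b by auto
  show ?thesis
  proof (cases "Max B = b")
    case True
    then show ?thesis
      using pred Max_ins b(2) by simp
  next
    case False
    then have "i < Max B"
      using above_b_above_i Max_ins by simp
    then show ?thesis
      using pred Max_ins False by simp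
  qed
qed

lemma cyclic_pred_insert_above:
  assumes y: "y \<in> B" "i < y"
  shows "cyclic_pred (insert i B) y = (if cyclic_pred B y = b then i else cyclic_pred B y)"
proof -
  let ?L = "{x\<in>B. x < y}"
  have fin_L: "finite ?L" and "b \<in> ?L"
    using fin b y by auto
  then have pred: "cyclic_pred B y = Max ?L"
    by (intro cyclic_pred_eq_Max_below) auto
  have "{x\<in>insert i B. x < y} = insert i ?L" "\<exists>x\<in>insert i B. x < y"
    using y by auto
  then have "cyclic_pred (insert i B) y = Max (insert i ?L)"
    by (simp only: cyclic_pred_eq_Max_below)
  also have "\<dots> = max i (Max ?L)"
    using fin_L \<open>b \<in> ?L\<close> by (intro Max_insert) auto
  finally have pred_ins: "cyclic_pred (insert i B) y = max i (Max ?L)" .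
  have "b \<le> Max ?L" "Max ?L \<in> B"
    using fin_L \<open>b \<in> ?L\<close> Max_in[OF fin_L] by auto
  show ?thesis
  proof (cases "Max ?L = b")
    case True
    then show ?thesis
      using pred pred_ins b(2) by simp
  next
    case False
    then have "i < Max ?L"
      using above_b_above_i \<open>b \<le> Max ?L\<close> \<open>Max ?L \<in> B\<close> by simp
    then show ?thesis
      using pred pred_ins False by simp
  qed
qed

lemma cyclic_pred_insert:
  "y \<in> B \<Longrightarrow> cyclic_pred (insert i B) y = (if cyclic_pred B y = b then i else cyclic_pred B y)"
  using cyclic_pred_insert_below cyclic_pred_insert_above i by (metis linorder_neqE_nat)

end

lemma cyclic_pred_image:
  assumes mono: "mono \<mu>" and inj: "inj_on \<mu> C" and fin: "finite C" and y: "y \<in> C"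
  shows "cyclic_pred (\<mu> ` C) (\<mu> y) = \<mu> (cyclic_pred C y)"
proof -
  have less_iff: "\<mu> b < \<mu> y \<longleftrightarrow> b < y" if "b \<in> C" for b
  proof
    show "b < y" if "\<mu> b < \<mu> y"
      using that monoD[OF mono, of y b] by (meson leD not_less)
    show "\<mu> b < \<mu> y" if "b < y"
      using that monoD[OF mono, of b y] inj_on_eq_iff[OF inj \<open>b \<in> C\<close> y] by auto
  qed
  have below: "{x\<in>\<mu> ` C. x < \<mu> y} = \<mu> ` {b\<in>C. b < y}"
    using less_iff by auto
  show ?thesis
  proof (cases "\<exists>b\<in>C. b < y")
    case True
    then have "\<exists>x\<in>\<mu> ` C. x < \<mu> y"
      using less_iff by auto
    then have "cyclic_pred (\<mu> ` C) (\<mu> y) = Max (\<mu> ` {b\<in>C. b < y})"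
      by (simp only: cyclic_pred_eq_Max_below below)
    also have "\<dots> = \<mu> (Max {b\<in>C. b < y})"
      using True fin by (intro mono_Max_commute[OF mono, symmetric]) auto
    also have "\<dots> = \<mu> (cyclic_pred C y)"
      using True by (simp only: cyclic_pred_eq_Max_below)
    finally show ?thesis .
  next
    case False
    then have "\<not> (\<exists>x\<in>\<mu> ` C. x < \<mu> y)"
      using less_iff by auto
    then have "cyclic_pred (\<mu> ` C) (\<mu> y) = Max (\<mu> ` C)"
      by (rule cyclic_pred_no_less)
    also have "\<dots> = \<mu> (Max C)"
      using fin y by (intro mono_Max_commute[OF mono, symmetric]) auto
    also have "\<dots> = \<mu> (cyclic_pred C y)"
      using cyclic_pred_no_less[OF False] by simp
    finally show ?thesis .
  qed
qed

lemma partition_on_block_finite: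
  assumes "partition_on {..<n::nat} Ps" and "B \<in> Ps"
  shows "finite B"
  using partition_on_block_subset[OF assms] finite_lessThan by (rule finite_subset)

lemma nc_perm_block:
  assumes P: "partition_on {..<n} Ps" and B: "B \<in> Ps" and k: "k \<in> B"
  shows "nc_perm n Ps k = cyclic_pred B k"
proof -
  have fin: "finite B" and "k < n"
    using partition_on_block_finite[OF P B] partition_on_block_subset[OF P B] k by auto
  have "(THE B. B \<in> Ps \<and> k \<in> B) = B"
    using B k partition_on_block_unique[OF P] by (intro the_equality) auto
  moreover have "k = Min B \<longleftrightarrow> \<not> (\<exists>b\<in>B. b < k)"
  proof
    show "\<not> (\<exists>b\<in>B. b < k)" if "k = Min B"
      using that fin by (auto simp: not_less)
    show "k = Min B" if "\<not> (\<exists>b\<in>B. b < k)"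
    proof -
      have "Min B \<in> B"
        using fin k by (intro Min_in) auto
      then show ?thesis
        using that Min_le[OF fin k] by force
    qed
  qed
  ultimately show ?thesis
    using \<open>k < n\<close> by (simp add: nc_perm_def cyclic_pred_def Let_def)
qed

lemma nc_perm_ge [simp]: "n \<le> k \<Longrightarrow> nc_perm n Ps k = k"
  by (simp add: nc_perm_def)

lemma nc_perm_in_block:
  assumes "partition_on {..<n} Ps" and "B \<in> Ps" and "k \<in> B"
  shows "nc_perm n Ps k \<in> B"
  using nc_perm_block[OF assms] cyclic_pred_in[OF partition_on_block_finite[OF assms(1,2)] assms(3)] by simp

lemma nc_perm_block_Diff:
  assumes P: "partition_on {..<n} Ps" and C: "C \<in> Ps" "y \<in> C" and "y \<noteq> p"
  shows "cyclic_pred (C - {p}) y = (if nc_perm n Ps y = p then nc_perm n Ps p else nc_perm n Ps y)"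
proof (cases "p \<in> C")
  case True
  then show ?thesis
    using cyclic_pred_Diff[OF partition_on_block_finite[OF P C(1)] C(2) \<open>y \<noteq> p\<close>]
      nc_perm_block[OF P C(1)] C(2) by simp
next
  case False
  then show ?thesis
    using nc_perm_block[OF P C] nc_perm_in_block[OF P C] by auto
qed

lemma nc_perm_less:
  assumes P: "partition_on {..<n} Ps" and "k < n"
  shows "nc_perm n Ps k < n"
proof -
  obtain B where "B \<in> Ps" "k \<in> B"
    using partition_on_block_exists[OF P] \<open>k < n\<close> by auto
  then have "nc_perm n Ps k \<in> {..<n}"
    using nc_perm_in_block[OF P] partition_on_block_subset[OF P] by (meson subsetD)
  then show ?thesis
    by simp
qed

lemma inj_nc_perm:
  assumes P: "partition_on {..<n} Ps"
  shows "inj (nc_perm n Ps)"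
proof (rule injI)
  fix x y
  assume eq: "nc_perm n Ps x = nc_perm n Ps y"
  show "x = y"
  proof (cases "x < n \<and> y < n")
    case True
    then obtain C D where C: "C \<in> Ps" "x \<in> C" and D: "D \<in> Ps" "y \<in> D"
      using partition_on_block_exists[OF P] by (meson lessThan_iff)
    have "nc_perm n Ps x \<in> C" "nc_perm n Ps x \<in> D"
      using nc_perm_in_block[OF P C] nc_perm_in_block[OF P D] eq by simp_all
    then have "C = D"
      using partition_on_block_unique[OF P C(1) D(1)] by blast
    then have "cyclic_pred C x = cyclic_pred C y"
      using eq nc_perm_block[OF P C] nc_perm_block[OF P D] by simp
    then show ?thesis
      using inj_onD[OF cyclic_pred_inj_on[OF partition_on_block_finite[OF P C(1)]]] C D \<open>C = D\<close> by blast
  next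
    case False
    then show ?thesis
      using eq nc_perm_less[OF P, of x] nc_perm_less[OF P, of y] nc_perm_ge[of n x Ps] nc_perm_ge[of n y Ps]
      by linarith
  qed
qed

lemma nc_perm_fixed_imp_singleton:
  assumes P: "partition_on {..<n} Ps" and "k < n" and fixed: "nc_perm n Ps k = k"
  shows "{k} \<in> Ps"
proof -
  obtain C where C: "C \<in> Ps" "k \<in> C"
    using partition_on_block_exists[OF P] \<open>k < n\<close> by auto
  have fin: "finite C"
    using partition_on_block_finite[OF P C(1)] .
  have pred: "cyclic_pred C k = k"
    using fixed nc_perm_block[OF P C] by simp
  then have no_less: "\<not> (\<exists>b\<in>C. b < k)"
    using cyclic_pred_less(2)[OF fin] by force
  then have "Max C = k"
    using pred cyclic_pred_no_less by simp
  then have "\<forall>b\<in>C. b = k"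
    using no_less Max_ge[OF fin] by (metis antisym not_less)
  then have "C = {k}"
    using C(2) by blast
  then show ?thesis
    using C(1) by simp
qed

lemma nc_perm_eq_id:
  assumes P: "partition_on {..<n} Ps" and no_descent: "\<And>k. k \<le> nc_perm n Ps k"
  shows "nc_perm n Ps = (\<lambda>k. k)"
proof
  fix k
  show "nc_perm n Ps k = k"
  proof (cases "k < n")
    case True
    then obtain C where C: "C \<in> Ps" "k \<in> C"
      using partition_on_block_exists[OF P] by auto
    have fin: "finite C"
      using partition_on_block_finite[OF P C(1)] .
    have max_in: "Max C \<in> C"
      using fin C(2) Max_in by blast
    then have "nc_perm n Ps (Max C) \<le> Max C"
      using nc_perm_in_block[OF P C(1)] fin by simp
    then have "nc_perm n Ps (Max C) = Max C"
      using no_descent[of "Max C"] by simp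
    moreover have "Max C < n"
      using max_in partition_on_block_subset[OF P C(1)] by auto
    ultimately have "{Max C} \<in> Ps"
      using nc_perm_fixed_imp_singleton[OF P] by blast
    then have "C = {Max C}"
      using partition_on_block_unique[OF P C(1)] max_in by blast
    then have "C = {k}"
      using C(2) by (metis singletonD)
    then show ?thesis
      using nc_perm_block[OF P C(1) C(2)] by (simp add: cyclic_pred_def)
  qed simp
qed

section \<open>Noncrossing partitions\<close>

lemma noncrossingD:
  assumes "noncrossing Ps" and "P \<in> Ps" "Q \<in> Ps" "P \<noteq> Q"
    and "a \<in> P" "b \<in> P" "c \<in> Q" "d \<in> Q" and "a < c" "c < b" "b < d"
  shows False
proof -
  have "P \<noteq> Q \<and> (\<exists>a b c d. a \<in> P \<and> b \<in> P \<and> c \<in> Q \<and> d \<in> Q \<and> a < c \<and> c < b \<and> b < d)"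
    using assms(4-) by (intro conjI exI[of _ a] exI[of _ b] exI[of _ c] exI[of _ d]) auto
  then have "\<exists>P\<in>Ps. \<exists>Q\<in>Ps. P \<noteq> Q \<and>
      (\<exists>a b c d. a \<in> P \<and> b \<in> P \<and> c \<in> Q \<and> d \<in> Q \<and> a < c \<and> c < b \<and> b < d)"
    using assms(2,3) by (intro bexI)
  with assms(1) show False
    unfolding noncrossing_def by contradiction
qed

lemma noncrossing_transfer:
  assumes nc: "noncrossing Ps"
    and blocks: "\<And>P Q x y u v. P \<in> Ps' \<Longrightarrow> Q \<in> Ps' \<Longrightarrow> P \<noteq> Q \<Longrightarrow> x \<in> P \<Longrightarrow> y \<in> P \<Longrightarrow> x \<noteq> y \<Longrightarrow>
        u \<in> Q \<Longrightarrow> v \<in> Q \<Longrightarrow> u \<noteq> v \<Longrightarrow> \<exists>P0\<in>Ps. \<exists>Q0\<in>Ps. P0 \<noteq> Q0 \<and> g ` P \<subseteq> P0 \<and> g ` Q \<subseteq> Q0"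
    and order: "\<And>P Q x y. P \<in> Ps' \<Longrightarrow> Q \<in> Ps' \<Longrightarrow> P \<noteq> Q \<Longrightarrow> x \<in> P \<Longrightarrow> y \<in> Q \<Longrightarrow> x < y \<Longrightarrow> g x < g y"
  shows "noncrossing Ps'"
  unfolding noncrossing_def
proof (intro notI, elim bexE exE conjE)
  fix P Q a b c d
  assume P: "P \<in> Ps'" and Q: "Q \<in> Ps'" and "P \<noteq> Q"
    and abcd: "a \<in> P" "b \<in> P" "c \<in> Q" "d \<in> Q" and "a < c" "c < b" "b < d"
  have "a \<noteq> b" "c \<noteq> d"
    using \<open>a < c\<close> \<open>c < b\<close> \<open>b < d\<close> by simp_all
  then obtain P0 Q0 where "P0 \<in> Ps" "Q0 \<in> Ps" "P0 \<noteq> Q0" "g ` P \<subseteq> P0" "g ` Q \<subseteq> Q0"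
    using blocks[OF P Q \<open>P \<noteq> Q\<close> abcd(1,2) _ abcd(3,4)] by blast
  then have mem: "g a \<in> P0" "g b \<in> P0" "g c \<in> Q0" "g d \<in> Q0"
    using abcd by auto
  have ord: "g a < g c" "g c < g b" "g b < g d"
    using order[OF P Q \<open>P \<noteq> Q\<close> abcd(1) abcd(3) \<open>a < c\<close>]
      order[OF Q P \<open>P \<noteq> Q\<close>[symmetric] abcd(3) abcd(2) \<open>c < b\<close>]
      order[OF P Q \<open>P \<noteq> Q\<close> abcd(2) abcd(4) \<open>b < d\<close>] by auto
  show False
    using noncrossingD[OF nc \<open>P0 \<in> Ps\<close> \<open>Q0 \<in> Ps\<close> \<open>P0 \<noteq> Q0\<close> mem ord] .
qed

lemma skip_image_squeeze: "skip p ` squeeze p ` (C - {p}) = C - {p}"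
proof -
  have "(\<lambda>k. skip p (squeeze p k)) ` (C - {p}) = id ` (C - {p})"
    by (rule image_cong) (simp_all add: skip_squeeze)
  then show ?thesis
    by (simp add: image_image)
qed

lemma noncrossing_remove_point:
  assumes "noncrossing Ps"
  shows "noncrossing (remove_point p Ps)"
proof (rule noncrossing_transfer[OF assms, where g = "skip p"])
  fix P Q x y u v
  assume "P \<in> remove_point p Ps" "Q \<in> remove_point p Ps" "P \<noteq> Q"
  then obtain P0 Q0 where "P0 \<in> Ps" "P = squeeze p ` (P0 - {p})" "Q0 \<in> Ps" "Q = squeeze p ` (Q0 - {p})"
    unfolding remove_point_def by blast
  moreover from this have "P0 \<noteq> Q0"
    using \<open>P \<noteq> Q\<close> by metis
  moreover have "skip p ` P \<subseteq> P0" "skip p ` Q \<subseteq> Q0"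
    using calculation(2,4) skip_image_squeeze by auto
  ultimately show "\<exists>P0\<in>Ps. \<exists>Q0\<in>Ps. P0 \<noteq> Q0 \<and> skip p ` P \<subseteq> P0 \<and> skip p ` Q \<subseteq> Q0"
    by blast
next
  show "skip p x < skip p y" if "x < y" for x y
    using that strict_mono_skip by (simp add: strict_mono_less)
qed

section \<open>Reduction at the least descent\<close>

lemma insert_after_skip_Suc: "\<sigma> (Suc i) = i \<Longrightarrow> insert_after i (\<sigma> \<circ> skip (Suc i)) = \<sigma>"
  by (auto simp: insert_after_def skip_def fun_eq_iff)

lemma insert_at_skip: "\<sigma> i = i \<Longrightarrow> insert_at i (\<sigma> \<circ> skip i) = \<sigma>"
  by (auto simp: insert_at_def skip_def fun_eq_iff)

lemma insert_at_skip_Suc: "insert_at i (\<sigma> \<circ> skip (Suc i)) = \<sigma>(i := i, Suc i := \<sigma> i)"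
  by (auto simp: insert_at_def skip_def fun_eq_iff)

lemma insert_after_skip: "insert_after i (\<sigma> \<circ> skip i) = \<sigma>(i := \<sigma> (Suc i), Suc i := i)"
  by (auto simp: insert_after_def skip_def fun_eq_iff)

lemma skip_avoids_value: "inj \<sigma> \<Longrightarrow> (\<sigma> \<circ> skip p) j \<noteq> \<sigma> p"
  by (simp add: inj_eq)

lemma nc_perm_remove_point_squeeze:
  assumes P: "partition_on {..<n} Ps" and "p < n" and C: "C \<in> Ps" "y \<in> C" and "y \<noteq> p"
  shows "nc_perm (n - 1) (remove_point p Ps) (squeeze p y) =
    squeeze p (if nc_perm n Ps y = p then nc_perm n Ps p else nc_perm n Ps y)"
proof -
  have y: "y \<in> C - {p}"
    using C(2) \<open>y \<noteq> p\<close> by simp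
  then have "squeeze p ` (C - {p}) \<in> remove_point p Ps"
    using C(1) unfolding remove_point_def by blast
  then have "nc_perm (n - 1) (remove_point p Ps) (squeeze p y) = cyclic_pred (squeeze p ` (C - {p})) (squeeze p y)"
    using nc_perm_block[OF partition_on_remove_point[OF P \<open>p < n\<close>]] y by blast
  also have "\<dots> = squeeze p (cyclic_pred (C - {p}) y)"
    using y partition_on_block_finite[OF P C(1)] inj_on_subset[OF inj_on_squeeze, of "C - {p}"]
    by (intro cyclic_pred_image mono_squeeze) auto
  finally show ?thesis
    using nc_perm_block_Diff[OF P C \<open>y \<noteq> p\<close>] by simp
qed

lemma nc_perm_remove_point:
  assumes P: "partition_on {..<n} Ps" and "p < n"
    and adjacent: "nc_perm n Ps p = p \<or> Suc (nc_perm n Ps p) = p"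
  shows "unskip (nc_perm n Ps p) (nc_perm n Ps \<circ> skip p) = nc_perm (n - 1) (remove_point p Ps)"
proof
  fix j
  let ?\<sigma> = "nc_perm n Ps" and ?y = "skip p j"
  show "unskip (?\<sigma> p) (?\<sigma> \<circ> skip p) j = nc_perm (n - 1) (remove_point p Ps) j"
  proof (cases "j < n - 1")
    case True
    then have "?y < n"
      using \<open>p < n\<close> by (auto simp: skip_def)
    then obtain C where C: "C \<in> Ps" "?y \<in> C"
      using partition_on_block_exists[OF P] by auto
    then have "nc_perm (n - 1) (remove_point p Ps) j = squeeze p (if ?\<sigma> ?y = p then ?\<sigma> p else ?\<sigma> ?y)"
      using nc_perm_remove_point_squeeze[OF P \<open>p < n\<close> _ _ skip_neq] by simp
    moreover have "?\<sigma> ?y \<noteq> ?\<sigma> p"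
      using skip_avoids_value[OF inj_nc_perm[OF P]] by simp
    ultimately show ?thesis
      using adjacent by (auto simp: squeeze_def unskip_def)
  next
    case False
    then have "?y = Suc j" "n \<le> Suc j"
      using \<open>p < n\<close> by (auto simp: skip_def)
    moreover have "?\<sigma> p < n"
      using nc_perm_less[OF P \<open>p < n\<close>] .
    ultimately show ?thesis
      using False by (simp add: unskip_def)
  qed
qed

definition displacement :: "nat \<Rightarrow> (nat \<Rightarrow> nat) \<Rightarrow> nat" where
  "displacement n \<sigma> = (\<Sum>k<n. (max (\<sigma> k) k - min (\<sigma> k) k)\<^sup>2)"

lemma displacement_update_less:
  assumes "Suc i < n"
    and local_less: "(max x i - min x i)\<^sup>2 + (max y (Suc i) - min y (Suc i))\<^sup>2 <
      (max (\<sigma> i) i - min (\<sigma> i) i)\<^sup>2 + (max (\<sigma> (Suc i)) (Suc i) - min (\<sigma> (Suc i)) (Suc i))\<^sup>2"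
  shows "displacement n (\<sigma>(i := x, Suc i := y)) < displacement n \<sigma>"
proof -
  let ?d = "\<lambda>f k. (max (f k) k - min (f k) k)\<^sup>2"
  have split: "displacement n f = ?d f i + ?d f (Suc i) + (\<Sum>k\<in>{..<n} - {i, Suc i}. ?d f k)" for f
  proof -
    have "displacement n f = ?d f i + (?d f (Suc i) + (\<Sum>k\<in>{..<n} - {i} - {Suc i}. ?d f k))"
      unfolding displacement_def using assms(1) by (simp add: sum.remove[of _ i] sum.remove[of _ "Suc i"])
    moreover have "{..<n} - {i} - {Suc i} = {..<n} - {i, Suc i}"
      by auto
    ultimately show ?thesis
      by simp
  qed
  have "(\<Sum>k\<in>{..<n} - {i, Suc i}. ?d (\<sigma>(i := x, Suc i := y)) k) = (\<Sum>k\<in>{..<n} - {i, Suc i}. ?d \<sigma> k)"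
    by (rule sum.cong) auto
  then show ?thesis
    using split[of \<sigma>] split[of "\<sigma>(i := x, Suc i := y)"] local_less by simp
qed

locale least_descent =
  fixes n :: nat and Ps :: "nat set set" and m :: nat and B :: "nat set"
  assumes partition: "partition_on {..<n} Ps" and noncrossing: "noncrossing Ps"
    and B: "B \<in> Ps" and m_in_B: "m \<in> B"
    and descent: "nc_perm n Ps m < m"
    and least: "\<And>k. k < m \<Longrightarrow> k \<le> nc_perm n Ps k"
begin

abbreviation \<sigma> where "\<sigma> \<equiv> nc_perm n Ps"

abbreviation a where "a \<equiv> \<sigma> m"

lemma finite_B: "finite B"
  using partition_on_block_finite[OF partition B] .

lemma m_less_n: "m < n"
  using partition_on_block_subset[OF partition B] m_in_B by auto

lemma a_in_B: "a \<in> B"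
  using nc_perm_in_block[OF partition B m_in_B] .

lemma below_m:
  assumes "b \<in> B" and "b < m"
  shows "b = a"
proof (rule antisym)
  show "b \<le> a"
    using cyclic_pred_less(1)[OF finite_B assms] nc_perm_block[OF partition B m_in_B] by simp
  show "a \<le> b"
  proof (rule ccontr)
    assume "\<not> a \<le> b"
    then have "\<sigma> a < a"
      using cyclic_pred_less(2)[OF finite_B \<open>b \<in> B\<close>] nc_perm_block[OF partition B a_in_B] by simp
    moreover have "a \<le> \<sigma> a"
      using least descent by simp
    ultimately show False
      by simp
  qed
qed

lemma a_le: "b \<in> B \<Longrightarrow> a \<le> b"
  using below_m descent by (metis le_less_linear less_imp_le order.strict_trans)

lemma \<sigma>_a: "\<sigma> a = Max B"
proof -
  have "\<not> (\<exists>b\<in>B. b < a)"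
    using a_le by (simp add: not_less)
  then show ?thesis
    using nc_perm_block[OF partition B a_in_B] cyclic_pred_no_less by simp
qed

lemma m_le_Max: "m \<le> Max B"
  using finite_B m_in_B by simp

lemma \<sigma>_eq_a_iff: "\<sigma> k = a \<longleftrightarrow> k = m"
  using inj_nc_perm[OF partition] by (auto dest: injD)

definition split_blocks :: "nat set set" where
  "split_blocks = insert {a} (insert (B - {a}) (Ps - {B}))"

lemma partition_split: "partition_on {..<n} split_blocks"
  unfolding split_blocks_def
  using a_in_B m_in_B descent by (intro partition_on_split_block[OF partition B]) auto

lemma noncrossing_split: "noncrossing split_blocks"
proof (rule noncrossing_transfer[OF noncrossing, where g = id])
  have lift: "P = B - {a} \<or> P \<in> Ps - {B}" if "P \<in> split_blocks" "x \<in> P" "y \<in> P" "x \<noteq> y" for P x y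
    using that unfolding split_blocks_def by auto
  have other_not_sub: "\<not> Q \<subseteq> B" if "Q \<in> Ps - {B}" for Q
    using that partition_on_block_nonempty[OF partition] partition_on_block_unique[OF partition _ B]
    by (metis Diff_iff ex_in_conv singletonI subsetD)
  fix P Q x y u v
  assume "P \<in> split_blocks" "Q \<in> split_blocks" "P \<noteq> Q" "x \<in> P" "y \<in> P" "x \<noteq> y" "u \<in> Q" "v \<in> Q" "u \<noteq> v"
  then have "P = B - {a} \<or> P \<in> Ps - {B}" "Q = B - {a} \<or> Q \<in> Ps - {B}"
    using lift by blast+
  then show "\<exists>P0\<in>Ps. \<exists>Q0\<in>Ps. P0 \<noteq> Q0 \<and> id ` P \<subseteq> P0 \<and> id ` Q \<subseteq> Q0"
    using \<open>P \<noteq> Q\<close> B other_not_sub by (elim disjE) (fastforce+)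
qed simp

lemma nc_perm_split: "nc_perm n split_blocks = \<sigma>(a := a, m := \<sigma> a)"
proof
  fix k
  consider "n \<le> k" | "k = a" | "k \<in> B - {a}" | "k < n" "k \<notin> B"
    by (metis Diff_iff not_le singletonD)
  then show "nc_perm n split_blocks k = (\<sigma>(a := a, m := \<sigma> a)) k"
  proof cases
    case 1
    then show ?thesis
      using m_less_n descent by simp
  next
    case 2
    have "{a} \<in> split_blocks"
      by (simp add: split_blocks_def)
    then show ?thesis
      using 2 nc_perm_block[OF partition_split, of "{a}" a] descent by (simp add: cyclic_pred_def)
  next
    case 3
    have "B - {a} \<in> split_blocks"
      by (simp add: split_blocks_def)
    then have "nc_perm n split_blocks k = cyclic_pred (B - {a}) k"
      using 3 by (rule nc_perm_block[OF partition_split])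
    also have "\<dots> = (if \<sigma> k = a then \<sigma> a else \<sigma> k)"
      using 3 nc_perm_block_Diff[OF partition B] by simp
    finally show ?thesis
      using 3 \<sigma>_eq_a_iff by auto
  next
    case 4
    then obtain C where C: "C \<in> Ps" "k \<in> C" "C \<noteq> B"
      using partition_on_block_exists[OF partition] by fastforce
    then have "C \<in> split_blocks" "k \<noteq> a" "k \<noteq> m"
      using 4 a_in_B m_in_B by (auto simp: split_blocks_def)
    then show ?thesis
      using nc_perm_block[OF partition_split _ C(2)] nc_perm_block[OF partition C(1,2)] by simp
  qed
qed

lemma displacement_split_less:
  assumes "Suc a = m"
  shows "displacement n (\<sigma>(a := a, m := \<sigma> a)) < displacement n \<sigma>"
proof -
  have dist: "max (Max B) m - min (Max B) m = Max B - m" "max (Max B) a - min (Max B) a = Max B - a"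
    "max a m - min a m = 1"
    using m_le_Max descent assms by auto
  have "Max B - m < Max B - a"
    using m_le_Max assms by linarith
  then have "(Max B - m)\<^sup>2 < (Max B - a)\<^sup>2 + 1"
    using power_strict_mono[of "Max B - m" "Max B - a" 2] by simp
  then show ?thesis
    using displacement_update_less[of a n a "\<sigma> a" \<sigma>] assms m_less_n dist \<sigma>_a by simp
qed

lemma admissible_by_split:
  assumes "Suc a = m"
    and smaller: "\<And>Ps'. partition_on {..<n} Ps' \<Longrightarrow> noncrossing Ps' \<Longrightarrow>
      displacement n (nc_perm n Ps') < displacement n \<sigma> \<Longrightarrow> admissible (nc_perm n Ps')"
    and fewer: "\<And>Ps'. partition_on {..<n - 1} Ps' \<Longrightarrow> noncrossing Ps' \<Longrightarrow> admissible (nc_perm (n - 1) Ps')"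
  shows "admissible \<sigma>"
proof -
  let ?\<rho> = "\<sigma> \<circ> skip m"
  have "\<sigma> = insert_after a ?\<rho>"
    using insert_after_skip_Suc[where \<sigma> = \<sigma> and i = a] assms(1) by simp
  moreover have "a < ?\<rho> a"
    using \<sigma>_a m_le_Max descent by (simp add: skip_def)
  moreover have "\<forall>j. ?\<rho> j \<noteq> a"
    using skip_avoids_value[OF inj_nc_perm[OF partition]] by blast
  moreover have "admissible (insert_at a ?\<rho>)"
    using smaller[OF partition_split noncrossing_split] displacement_split_less[OF assms(1)]
      insert_at_skip_Suc[where \<sigma> = \<sigma> and i = a] nc_perm_split assms(1) by simp
  moreover have "admissible (unskip a ?\<rho>)"
    using fewer[OF partition_on_remove_point[OF partition m_less_n] noncrossing_remove_point[OF noncrossing]]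
      nc_perm_remove_point[OF partition m_less_n] assms(1) by simp
  ultimately show ?thesis
    using admissible_insert_after by metis
qed

end

locale least_descent_gap = least_descent +
  assumes gap: "Suc (nc_perm n Ps m) < m"
begin

lemma before_m: "a < m - 1" "m - 1 < m" "m - 1 < n"
  using gap m_less_n by auto

lemma before_m_notin_B: "m - 1 \<notin> B"
  using below_m[of "m - 1"] before_m by auto

lemma fixed_before_m: "\<sigma> (m - 1) = m - 1"
proof (rule ccontr)
  assume "\<sigma> (m - 1) \<noteq> m - 1"
  then have less: "m - 1 < \<sigma> (m - 1)"
    using least[of "m - 1"] before_m by linarith
  obtain C where C: "C \<in> Ps" "m - 1 \<in> C"
    using partition_on_block_exists[OF partition] before_m by auto
  then have "C \<noteq> B"
    using before_m_notin_B by blast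
  have "\<sigma> (m - 1) \<in> C"
    using nc_perm_in_block[OF partition C] .
  moreover have "m \<notin> C"
    using partition_on_block_unique[OF partition C(1) B _ m_in_B] \<open>C \<noteq> B\<close> by blast
  ultimately have "\<sigma> (m - 1) \<noteq> m"
    by metis
  then have "m < \<sigma> (m - 1)"
    using less before_m(2) by linarith
  show False
    by (rule noncrossingD[OF noncrossing B C(1) \<open>C \<noteq> B\<close>[symmetric] a_in_B m_in_B C(2)
          \<open>\<sigma> (m - 1) \<in> C\<close> before_m(1,2) \<open>m < \<sigma> (m - 1)\<close>])
qed

lemma singleton_before_m: "{m - 1} \<in> Ps"
  using nc_perm_fixed_imp_singleton[OF partition before_m(3) fixed_before_m] .

definition merge_blocks :: "nat set set" where
  "merge_blocks = insert (B \<union> {m - 1}) (Ps - {B, {m - 1}})"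

lemma partition_merge: "partition_on {..<n} merge_blocks"
  unfolding merge_blocks_def using partition_on_merge_blocks[OF partition B singleton_before_m] .

lemma merge_blocks_other:
  assumes "P \<in> merge_blocks" and "P \<noteq> B \<union> {m - 1}"
  shows "P \<in> Ps" "P \<noteq> B" "m - 1 \<notin> P" "m \<notin> P"
proof -
  show P: "P \<in> Ps" "P \<noteq> B"
    using assms unfolding merge_blocks_def by blast+
  have "P \<noteq> {m - 1}"
    using assms unfolding merge_blocks_def by blast
  then show "m - 1 \<notin> P"
    using partition_on_block_unique[OF partition P(1) singleton_before_m _ singletonI] by blast
  show "m \<notin> P"
    using partition_on_block_unique[OF partition P(1) B _ m_in_B] P(2) by blast
qed

text \<open>
  Moving \<open>m - 1\<close> onto \<open>m\<close> embeds the merged partition into the old one: \<open>m - 1\<close> lies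
  between \<open>a\<close> and \<open>m\<close>, consecutive elements of \<open>B\<close>, so no other block separates it
  from \<open>m\<close>.
\<close>

lemma noncrossing_merge: "noncrossing merge_blocks"
proof (rule noncrossing_transfer[OF noncrossing, where g = "\<lambda>x. if x = m - 1 then m else x"])
  let ?g = "\<lambda>x. if x = m - 1 then m else x"
  let ?lift = "\<lambda>P. if P = B \<union> {m - 1} then B else P"
  have lift: "?lift P \<in> Ps" "?g ` P \<subseteq> ?lift P" if "P \<in> merge_blocks" for P
    using B m_in_B before_m_notin_B merge_blocks_other[OF that] by auto
  fix P Q x y u v
  assume PQ: "P \<in> merge_blocks" "Q \<in> merge_blocks" "P \<noteq> Q"
  have "?lift P \<noteq> ?lift Q"
    using merge_blocks_other[OF PQ(1)] merge_blocks_other[OF PQ(2)] PQ(3) by auto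
  then show "\<exists>P0\<in>Ps. \<exists>Q0\<in>Ps. P0 \<noteq> Q0 \<and> ?g ` P \<subseteq> P0 \<and> ?g ` Q \<subseteq> Q0"
    using lift[OF PQ(1)] lift[OF PQ(2)] by blast
next
  fix P Q x y
  assume PQ: "P \<in> merge_blocks" "Q \<in> merge_blocks" "P \<noteq> Q" and "x \<in> P" "y \<in> Q" "x < y"
  show "(if x = m - 1 then m else x) < (if y = m - 1 then m else y)"
  proof (cases "x = m - 1")
    case True
    then have "P = B \<union> {m - 1}"
      using merge_blocks_other(3)[OF PQ(1)] \<open>x \<in> P\<close> by blast
    then have "y \<noteq> m"
      using merge_blocks_other(4)[OF PQ(2)] PQ(3) \<open>y \<in> Q\<close> by blast
    then show ?thesis
      using True \<open>x < y\<close> before_m by auto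
  next
    case False
    then show ?thesis
      using \<open>x < y\<close> before_m by auto
  qed
qed

lemma nc_perm_merge: "nc_perm n merge_blocks = \<sigma>(m - 1 := a, m := m - 1)"
proof
  fix k
  have a_last: "x \<le> a" if "x \<in> B" "x < m - 1" for x
    using below_m that before_m by fastforce
  note insert_facts = finite_B before_m_notin_B a_in_B before_m(1) a_last
  have merged: "insert (m - 1) B \<in> merge_blocks"
    by (simp add: merge_blocks_def)
  consider "n \<le> k" | "k = m - 1" | "k \<in> B" | "k < n" "k \<noteq> m - 1" "k \<notin> B"
    using not_le by blast
  then show "nc_perm n merge_blocks k = (\<sigma>(m - 1 := a, m := m - 1)) k"
  proof cases
    case 1
    then show ?thesis
      using before_m m_less_n by simp
  next
    case 2
    then show ?thesis
      using nc_perm_block[OF partition_merge merged] cyclic_pred_insert_new[OF insert_facts] before_m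
      by simp
  next
    case 3
    then have "nc_perm n merge_blocks k = (if \<sigma> k = a then m - 1 else \<sigma> k)"
      using nc_perm_block[OF partition_merge merged] cyclic_pred_insert[OF insert_facts]
        nc_perm_block[OF partition B] by simp
    then show ?thesis
      using 3 before_m_notin_B \<sigma>_eq_a_iff by auto
  next
    case 4
    then obtain C where C: "C \<in> Ps" "k \<in> C" "C \<noteq> B" "C \<noteq> {m - 1}"
      using partition_on_block_exists[OF partition] by fastforce
    then have "C \<in> merge_blocks" "k \<noteq> m"
      using 4 m_in_B by (auto simp: merge_blocks_def)
    then show ?thesis
      using 4 nc_perm_block[OF partition_merge _ C(2)] nc_perm_block[OF partition C(1,2)] by simp
  qed
qed

lemma displacement_merge_less: "displacement n (\<sigma>(m - 1 := a, m := m - 1)) < displacement n \<sigma>"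
proof -
  have m: "Suc (m - 1) = m"
    using before_m by simp
  have dist: "max a (m - 1) - min a (m - 1) = m - 1 - a" "max (m - 1) m - min (m - 1) m = 1"
    "max (\<sigma> (m - 1)) (m - 1) - min (\<sigma> (m - 1)) (m - 1) = 0" "max a m - min a m = Suc (m - 1 - a)"
    using fixed_before_m before_m by auto
  have "(m - 1 - a)\<^sup>2 + 1 < (Suc (m - 1 - a))\<^sup>2"
    using before_m by (simp add: power2_eq_square)
  then show ?thesis
    using displacement_update_less[of "m - 1" n a "m - 1" \<sigma>] m m_less_n dist by simp
qed

lemma admissible_by_merge:
  assumes smaller: "\<And>Ps'. partition_on {..<n} Ps' \<Longrightarrow> noncrossing Ps' \<Longrightarrow>
      displacement n (nc_perm n Ps') < displacement n \<sigma> \<Longrightarrow> admissible (nc_perm n Ps')"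
    and fewer: "\<And>Ps'. partition_on {..<n - 1} Ps' \<Longrightarrow> noncrossing Ps' \<Longrightarrow> admissible (nc_perm (n - 1) Ps')"
  shows "admissible \<sigma>"
proof -
  let ?\<rho> = "\<sigma> \<circ> skip (m - 1)"
  have m: "Suc (m - 1) = m"
    using before_m by simp
  have "\<sigma> = insert_at (m - 1) ?\<rho>"
    using insert_at_skip[where \<sigma> = \<sigma> and i = "m - 1"] fixed_before_m by simp
  moreover have "?\<rho> (m - 1) < m - 1"
    using before_m m by (simp add: skip_def)
  moreover have "\<forall>j. ?\<rho> j \<noteq> m - 1"
    using skip_avoids_value[OF inj_nc_perm[OF partition]] fixed_before_m by metis
  moreover have "admissible (insert_after (m - 1) ?\<rho>)"
    using smaller[OF partition_merge noncrossing_merge] displacement_merge_less nc_perm_merge m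
      insert_after_skip[where \<sigma> = \<sigma> and i = "m - 1"] by simp
  moreover have "admissible (unskip (m - 1) ?\<rho>)"
    using fewer[OF partition_on_remove_point[OF partition before_m(3)] noncrossing_remove_point[OF noncrossing]]
      nc_perm_remove_point[OF partition before_m(3)] fixed_before_m by simp
  ultimately show ?thesis
    using admissible_insert_at by metis
qed

end

context least_descent
begin

lemma admissible_by_reduction:
  assumes "\<And>Ps'. partition_on {..<n} Ps' \<Longrightarrow> noncrossing Ps' \<Longrightarrow>
      displacement n (nc_perm n Ps') < displacement n \<sigma> \<Longrightarrow> admissible (nc_perm n Ps')"
    and "\<And>Ps'. partition_on {..<n - 1} Ps' \<Longrightarrow> noncrossing Ps' \<Longrightarrow> admissible (nc_perm (n - 1) Ps')"
  shows "admissible \<sigma>"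
proof (cases "Suc a = m")
  case True
  then show ?thesis
    by (rule admissible_by_split[OF _ assms])
next
  case False
  then interpret least_descent_gap n Ps m B
    using descent by unfold_locales simp
  show ?thesis
    by (rule admissible_by_merge[OF assms])
qed

end

lemma least_descent_exists:
  assumes "partition_on {..<n} Ps" and "noncrossing Ps" and "\<exists>k. nc_perm n Ps k < k"
  obtains m B where "least_descent n Ps m B"
proof -
  define m where "m = (LEAST k. nc_perm n Ps k < k)"
  have descent: "nc_perm n Ps m < m"
    using LeastI_ex[OF assms(3)] unfolding m_def .
  have least: "k \<le> nc_perm n Ps k" if "k < m" for k
    using not_less_Least[OF that[unfolded m_def]] by simp
  have "m < n"
    by (rule ccontr) (use descent in simp)
  then obtain B where "B \<in> Ps" "m \<in> B"
    using partition_on_block_exists[OF assms(1)] by auto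
  then show thesis
    using that least_descent.intro[OF assms(1,2) _ _ descent least] by blast
qed

lemma admissible_nc_perm:
  "partition_on {..<n} Ps \<Longrightarrow> noncrossing Ps \<Longrightarrow> admissible (nc_perm n Ps)"
proof (induction n arbitrary: Ps rule: less_induct)
  case (less n)
  have fewer: "admissible (nc_perm (n - 1) Ps')"
    if "0 < n" "partition_on {..<n - 1} Ps'" "noncrossing Ps'" for Ps'
    using less.IH[of "n - 1"] that by simp
  have "admissible (nc_perm n Ps)"
    if "partition_on {..<n} Ps" "noncrossing Ps" "displacement n (nc_perm n Ps) = d" for Ps d
    using that
  proof (induction d arbitrary: Ps rule: less_induct)
    case (less d)
    show ?case
    proof (cases "\<exists>k. nc_perm n Ps k < k")
      case False
      then show ?thesis
        using nc_perm_eq_id[OF less.prems(1)] admissible_id by (simp add: not_less)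
    next
      case True
      then obtain m B where "least_descent n Ps m B"
        using least_descent_exists less.prems(1,2) by blast
      then interpret least_descent n Ps m B .
      show ?thesis
      proof (rule admissible_by_reduction)
        show "admissible (nc_perm n Ps')"
          if "partition_on {..<n} Ps'" "noncrossing Ps'" "displacement n (nc_perm n Ps') < displacement n \<sigma>"
          for Ps'
          using less.IH[OF _ that(1,2) refl] that(3) less.prems(3) by simp
        show "admissible (nc_perm (n - 1) Ps')" if "partition_on {..<n - 1} Ps'" "noncrossing Ps'" for Ps'
          using fewer[OF _ that] m_less_n by simp
      qed
    qed
  qed
  then show ?case
    using less.prems by simp
qed

theorem corollary8p13:
  fixes P :: "forest \<Rightarrow> var mpoly" and F :: forest and \<sigma> :: "nat \<Rightarrow> nat"
  assumes "is_double_forest_family P"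
    and "is_forest F"
    and "noncrossing_perm \<sigma>"
  shows "graham_positive (ev \<sigma> (P F))"
proof -
  obtain n Ps where "partition_on {..<n} Ps" "noncrossing Ps" "\<sigma> = nc_perm n Ps"
    using assms(3) unfolding noncrossing_perm_def by blast
  then have "admissible \<sigma>"
    using admissible_nc_perm by simp
  then have "graham_semiring (ev \<sigma> (P F))"
    using admissible_ev_graham_semiring[OF assms(1)] assms(2) by blast
  then show ?thesis
    by (rule graham_semiring_imp_graham_positive)
qed

end
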